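(* There is an absolute constant $C \in \mathbb{N}$ such that for every odd integer $n \ge 1$ there exists a $C$-Lipschitz mapping $\psi\colon\{0,1\}^n\to\{0,1\}^n$ from ${\sf Majority}$ to ${\sf Dictator}$; that is, $\psi$ is a bijection, ${\sf Majority}(z) = \psi(z)_1$ for every $z\in\{0,1\}^n$, and ${\sf dist}(\psi(x),\psi(y)) \le C\,{\sf dist}(x,y)$ for all $x,y\in\{0,1\}^n$.
   Context: ${\sf dist}$ denotes Hamming distance. ${\sf Majority}\colon\{0,1\}^n\to\{0,1\}$ is defined by ${\sf Majority}(x)=1$ if $\sum_{i=1}^n x_i > n/2$ and $0$ otherwise. ${\sf Dictator}(x)=x_1$. Given $f,g\colon\{0,1\}^n\to\{0,1\}$, a mapping from $f$ to $g$ is a bijection $\psi\colon\{0,1\}^n\to\{0,1\}^n$ with $f(z)=g(\psi(z))$ for all $z$. A map $\phi$ is $C$-Lipschitz if ${\sf dist}(\phi(x),\phi(y))\le C\,{\sf dist}(x,y)$ for all $x,y$. *)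

theory Defs
  imports Main
begin

text \<open>Boolean hypercube {0,1}^n as bool lists of length n (True = 1); coordinate 1 of the
paper is list index 0.\<close>

definition hcube :: "nat \<Rightarrow> bool list set" where
  "hcube n = {xs. length xs = n}"

definition hdist :: "bool list \<Rightarrow> bool list \<Rightarrow> nat" where
  "hdist xs ys = card {i. i < length xs \<and> i < length ys \<and> xs ! i \<noteq> ys ! i}"

definition majority :: "bool list \<Rightarrow> bool" where
  "majority xs \<longleftrightarrow> 2 * card {i. i < length xs \<and> xs ! i} > length xs"

definition dictator :: "bool list \<Rightarrow> bool" where
  "dictator xs = xs ! 0"

definition lipschitz_on_cube :: "nat \<Rightarrow> nat \<Rightarrow> (bool list \<Rightarrow> bool list) \<Rightarrow> bool" where
  "lipschitz_on_cube n C \<psi> \<longleftrightarrow>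
     (\<forall>x\<in>hcube n. \<forall>y\<in>hcube n. hdist (\<psi> x) (\<psi> y) \<le> C * hdist x y)"

end

theory Submission
  imports Defs
begin

text \<open>Encode x by its majority bit followed by the n - 1 adjacent differences x_i \<noteq> x_(i+1).
The differences determine x up to complementing all bits, and for odd n complementing flips
the majority, so the encoding is injective, hence a bijection of the cube. Changing one bit of x
changes at most the majority bit and two adjacent differences, so it is 3-Lipschitz.\<close>

definition majority_diff_code :: "bool list \<Rightarrow> bool list" where
  "majority_diff_code xs = majority xs # map (\<lambda>i. xs ! i \<noteq> xs ! Suc i) [0..<length xs - 1]"

lemma length_majority_diff_code:
  "xs \<noteq> [] \<Longrightarrow> length (majority_diff_code xs) = length xs"
  by (simp add: majority_diff_code_def)

lemma majority_diff_code_nth_0: "majority_diff_code xs ! 0 = majority xs"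
  by (simp add: majority_diff_code_def)

lemma majority_diff_code_nth_Suc:
  "Suc j < length xs \<Longrightarrow> majority_diff_code xs ! Suc j = (xs ! j \<noteq> xs ! Suc j)"
  by (simp add: majority_diff_code_def less_diff_conv)

lemma majority_map_Not:
  assumes "odd (length xs)"
  shows "majority (map Not xs) = (\<not> majority xs)"
proof -
  let ?T = "{i. i < length xs \<and> xs ! i}"
  have "{i. i < length (map Not xs) \<and> map Not xs ! i} = {..<length xs} - ?T"
    by auto
  then have "card {i. i < length (map Not xs) \<and> map Not xs ! i} = length xs - card ?T"
    by (simp add: card_Diff_subset subset_eq)
  moreover have "card ?T \<le> length xs"
    using card_mono[of "{..<length xs}" ?T] by auto
  moreover have "odd m \<Longrightarrow> c \<le> m \<Longrightarrow> (m < 2 * (m - c)) = (\<not> m < 2 * c)" for c m :: nat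
    by presburger
  ultimately show ?thesis
    using assms unfolding majority_def by simp
qed

lemma eq_or_eq_map_Not_if_same_adjacent_diffs:
  assumes "length x = length y"
    and "\<And>j. Suc j < length x \<Longrightarrow> (x ! j \<noteq> x ! Suc j) = (y ! j \<noteq> y ! Suc j)"
  shows "y = x \<or> y = map Not x"
proof -
  have agree: "(x ! i = y ! i) = (x ! 0 = y ! 0)" if "i < length x" for i
    using that
  proof (induction i)
    case (Suc i)
    then show ?case using assms(2)[of i] by auto
  qed simp
  show ?thesis
  proof (cases "x ! 0 = y ! 0")
    case True
    then show ?thesis using agree assms(1) by (auto intro: nth_equalityI)
  next
    case False
    then show ?thesis using agree assms(1) by (auto intro!: nth_equalityI)
  qed
qed

lemma inj_on_majority_diff_code:
  assumes "odd n"
  shows "inj_on majority_diff_code (hcube n)"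
proof (rule inj_onI)
  fix x y assume "x \<in> hcube n" "y \<in> hcube n" and code: "majority_diff_code x = majority_diff_code y"
  then have len: "length x = n" "length y = n" by (auto simp: hcube_def)
  have "majority x = majority y"
    using arg_cong[OF code, of "\<lambda>l. l ! 0"] by (simp add: majority_diff_code_nth_0)
  moreover have "(x ! j \<noteq> x ! Suc j) = (y ! j \<noteq> y ! Suc j)" if "Suc j < length x" for j
    using arg_cong[OF code, of "\<lambda>l. l ! Suc j"] that len
    by (simp add: majority_diff_code_nth_Suc)
  ultimately show "x = y"
    using eq_or_eq_map_Not_if_same_adjacent_diffs[of x y] majority_map_Not[of x] assms len
    by force
qed

lemma bij_betw_majority_diff_code:
  assumes "odd n"
  shows "bij_betw majority_diff_code (hcube n) (hcube n)"
proof -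
  have "finite (hcube n)"
    using finite_lists_length_eq[of "UNIV :: bool set" n] by (simp add: hcube_def)
  moreover have "n \<noteq> 0" using assms by presburger
  then have "majority_diff_code ` hcube n \<subseteq> hcube n"
    by (auto simp: hcube_def length_majority_diff_code)
  ultimately show ?thesis
    using endo_inj_surj inj_on_majority_diff_code[OF assms] by (simp add: bij_betw_def)
qed

lemma majority_diff_code_diff_subset:
  assumes "length x = n" "length y = n" "n \<noteq> 0"
  defines "D \<equiv> {i. i < n \<and> x ! i \<noteq> y ! i}"
  shows "{i. i < length (majority_diff_code x) \<and> i < length (majority_diff_code y)
             \<and> majority_diff_code x ! i \<noteq> majority_diff_code y ! i} \<subseteq> insert 0 (D \<union> Suc ` D)"
proof
  fix i assume i: "i \<in> {i. i < length (majority_diff_code x) \<and> i < length (majority_diff_code y)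
             \<and> majority_diff_code x ! i \<noteq> majority_diff_code y ! i}"
  show "i \<in> insert 0 (D \<union> Suc ` D)"
  proof (cases i)
    case (Suc j)
    with i assms have "Suc j < n" "(x ! j \<noteq> x ! Suc j) \<noteq> (y ! j \<noteq> y ! Suc j)"
      by (auto simp: length_majority_diff_code majority_diff_code_nth_Suc)
    then show ?thesis using Suc unfolding D_def by auto
  qed simp
qed

lemma hdist_majority_diff_code_le:
  assumes "length x = n" "length y = n" "n \<noteq> 0"
  shows "hdist (majority_diff_code x) (majority_diff_code y) \<le> 3 * hdist x y"
proof (cases "x = y")
  case False
  define D where "D = {i. i < n \<and> x ! i \<noteq> y ! i}"
  have "finite D" by (simp add: D_def)
  have dist: "hdist x y = card D" using assms by (simp add: hdist_def D_def)
  have "D \<noteq> {}" using False assms by (auto simp: D_def intro: nth_equalityI)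
  then have "card D \<ge> 1" using \<open>finite D\<close> by (simp add: Suc_le_eq card_gt_0_iff)
  have "hdist (majority_diff_code x) (majority_diff_code y) \<le> card (insert 0 (D \<union> Suc ` D))"
    unfolding hdist_def
    by (rule card_mono) (use \<open>finite D\<close> majority_diff_code_diff_subset[OF assms] in \<open>auto simp: D_def\<close>)
  also have "\<dots> \<le> 1 + (card D + card (Suc ` D))"
    using card_insert_le_m1 card_Un_le[of D "Suc ` D"] \<open>finite D\<close>
    by (simp add: card_insert_if)
  also have "\<dots> \<le> 3 * card D"
    using card_image_le[OF \<open>finite D\<close>, of Suc] \<open>card D \<ge> 1\<close> by simp
  finally show ?thesis using dist by simp
qed (simp add: hdist_def)

theorem theorem1:
  shows "\<exists>C::nat. \<forall>n::nat. odd n \<longrightarrow>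
           (\<exists>\<psi>. bij_betw \<psi> (hcube n) (hcube n)
                 \<and> (\<forall>z\<in>hcube n. majority z = dictator (\<psi> z))
                 \<and> lipschitz_on_cube n C \<psi>)"
proof (intro exI[of _ 3] allI impI)
  fix n :: nat assume "odd n"
  then have "n \<noteq> 0" by presburger
  have "bij_betw majority_diff_code (hcube n) (hcube n)"
    using \<open>odd n\<close> by (rule bij_betw_majority_diff_code)
  moreover have "\<forall>z\<in>hcube n. majority z = dictator (majority_diff_code z)"
    by (simp add: dictator_def majority_diff_code_nth_0)
  moreover have "lipschitz_on_cube n 3 majority_diff_code"
    using hdist_majority_diff_code_le \<open>n \<noteq> 0\<close> by (auto simp: lipschitz_on_cube_def hcube_def)
  ultimately show "\<exists>\<psi>. bij_betw \<psi> (hcube n) (hcube n)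
                 \<and> (\<forall>z\<in>hcube n. majority z = dictator (\<psi> z))
                 \<and> lipschitz_on_cube n 3 \<psi>" by blast
qed

end
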